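(* Let $p$ be a two-phase solution with constants $c_0,c_1,c_2$. At points where $p\neq0$, $$\partial_x\nu_1=2i\nu_1(\mu_1+\mu_2-\mu_1^*-\mu_2^* ),\qquad \partial_x\nu_2=4i\nu_1(\mu_1^*\mu_2^*-\mu_1\mu_2)-2c_2\,\partial_x\nu_1,\qquad \partial_t\nu_1=\partial_x\nu_2,$$ $$\partial_t\nu_2=8i\nu_1\big((\mu_1-\mu_1^* )|\mu_2|^2+(\mu_2-\mu_2^* )|\mu_1|^2\big)-4c_2\,\partial_x\nu_2-4c_2^2\,\partial_x\nu_1.$$
   Context: Let $p(x,t)$, $(x,t)\in\mathbb R^2$, be a smooth complex-valued solution of the focusing nonlinear Schrödinger equation $ip_t+p_{xx}+2|p|^2p=0$; $^*$ denotes complex conjugation and subscripts denote partial derivatives. Put $\mathbb U=\begin{pmatrix}-i\lambda& ip\\ ip^*& i\lambda\end{pmatrix}$ and $\mathbb V=\begin{pmatrix}-2i\lambda^2+i|p|^2& 2i\lambda p-p_x\\ 2i\lambda p^*+p^*_x& 2i\lambda^2-i|p|^2\end{pmatrix}$. The solution $p$ is called a two-phase solution if there exist real constants $c_0,c_1,c_2$ such that the matrix $\Psi=\begin{pmatrix}\Psi_{11}&\Psi_{12}\\ \Psi_{21}&-\Psi_{11}\end{pmatrix}$ with $\Psi_{11}=-i\lambda^3-ic_2\lambda^2+(\tfrac12 i|p|^2-ic_1)\lambda+\tfrac14(pp^*_x-p_xp^* )+\tfrac12 ic_2|p|^2-ic_0$, $\Psi_{12}=ip\lambda^2+(-\tfrac12p_x+ic_2p)\lambda-\tfrac14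 ip_{xx}-\tfrac12 ip|p|^2-\tfrac12c_2p_x+ic_1p$, $\Psi_{21}=ip^*\lambda^2+(\tfrac12p^*_x+ic_2p^* )\lambda-\tfrac14 ip^*_{xx}-\tfrac12 ip^*|p|^2+\tfrac12c_2p^*_x+ic_1p^*$ satisfies $\Psi_x=[\mathbb U,\Psi]$ and $\Psi_t=[\mathbb V,\Psi]$ identically in $\lambda\in\mathbb C$. Set $\nu_1=|p|^2$ and $\nu_2=i(p^*p_x-pp^*_x)$ (both real). At points where $p\neq0$ the Dirichlet eigenvalues $\mu_1,\mu_2\in\mathbb C$ are defined (up to order) by $\Psi_{12}(\lambda)=ip(\lambda-\mu_1)(\lambda-\mu_2)$. *)

theory Defs
  imports "HOL-Analysis.Analysis"
begin

definition pdx :: "(real \<Rightarrow> real \<Rightarrow> 'a::real_normed_vector) \<Rightarrow> real \<Rightarrow> real \<Rightarrow> 'a" where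
  "pdx f x t = vector_derivative (\<lambda>y. f y t) (at x)"

definition pdt :: "(real \<Rightarrow> real \<Rightarrow> 'a::real_normed_vector) \<Rightarrow> real \<Rightarrow> real \<Rightarrow> 'a" where
  "pdt f x t = vector_derivative (\<lambda>s. f x s) (at t)"

text \<open>Iterated partial derivatives: True = d/dx, False = d/dt.\<close>
fun iter_pd :: "bool list \<Rightarrow> (real \<Rightarrow> real \<Rightarrow> complex) \<Rightarrow> real \<Rightarrow> real \<Rightarrow> complex" where
  "iter_pd [] f = f"
| "iter_pd (d # ds) f = (if d then pdx (iter_pd ds f) else pdt (iter_pd ds f))"

text \<open>Smooth (C-infinity): every iterated partial derivative is (Frechet) differentiable
  everywhere as a function of (x,t); hence all partial derivatives exist and are continuous.\<close>
definition smooth2 :: "(real \<Rightarrow> real \<Rightarrow> complex) \<Rightarrow> bool" where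
  "smooth2 f \<longleftrightarrow> (\<forall>ds z. (\<lambda>w. iter_pd ds f (fst w) (snd w)) differentiable (at z))"

definition nls_solution :: "(real \<Rightarrow> real \<Rightarrow> complex) \<Rightarrow> bool" where
  "nls_solution p \<longleftrightarrow> smooth2 p \<and>
     (\<forall>x t. \<i> * pdt p x t + pdx (pdx p) x t + 2 * (complex_of_real (cmod (p x t)))\<^sup>2 * p x t = 0)"

definition conjf :: "(real \<Rightarrow> real \<Rightarrow> complex) \<Rightarrow> real \<Rightarrow> real \<Rightarrow> complex" where
  "conjf p x t = cnj (p x t)"

definition mat2 :: "complex \<Rightarrow> complex \<Rightarrow> complex \<Rightarrow> complex \<Rightarrow> complex^2^2" where
  "mat2 a b c d = (\<chi> i j. if i = 1 then (if j = 1 then a else b) else (if j = 1 then c else d))"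

definition Umat :: "(real \<Rightarrow> real \<Rightarrow> complex) \<Rightarrow> complex \<Rightarrow> real \<Rightarrow> real \<Rightarrow> complex^2^2" where
  "Umat p lam x t = mat2 (-\<i>*lam) (\<i> * p x t) (\<i> * cnj (p x t)) (\<i>*lam)"

definition Vmat :: "(real \<Rightarrow> real \<Rightarrow> complex) \<Rightarrow> complex \<Rightarrow> real \<Rightarrow> real \<Rightarrow> complex^2^2" where
  "Vmat p lam x t = mat2
     (-2*\<i>*lam\<^sup>2 + \<i> * (complex_of_real (cmod (p x t)))\<^sup>2)
     (2*\<i>*lam * p x t - pdx p x t)
     (2*\<i>*lam * cnj (p x t) + pdx (conjf p) x t)
     (2*\<i>*lam\<^sup>2 - \<i> * (complex_of_real (cmod (p x t)))\<^sup>2)"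

definition Psi11 :: "(real \<Rightarrow> real \<Rightarrow> complex) \<Rightarrow> real \<Rightarrow> real \<Rightarrow> real \<Rightarrow> complex \<Rightarrow> real \<Rightarrow> real \<Rightarrow> complex" where
  "Psi11 p c0 c1 c2 lam x t =
     -\<i>*lam^3 - \<i>*c2*lam\<^sup>2 + (\<i>/2 * (complex_of_real (cmod (p x t)))\<^sup>2 - \<i>*c1)*lam
     + 1/4 * (p x t * pdx (conjf p) x t - pdx p x t * cnj (p x t))
     + \<i>/2 * c2 * (complex_of_real (cmod (p x t)))\<^sup>2 - \<i>*c0"

definition Psi12 :: "(real \<Rightarrow> real \<Rightarrow> complex) \<Rightarrow> real \<Rightarrow> real \<Rightarrow> real \<Rightarrow> complex \<Rightarrow> real \<Rightarrow> real \<Rightarrow> complex" where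
  "Psi12 p c0 c1 c2 lam x t =
     \<i> * p x t * lam\<^sup>2 + (-1/2 * pdx p x t + \<i>*c2 * p x t)*lam
     - \<i>/4 * pdx (pdx p) x t - \<i>/2 * p x t * (complex_of_real (cmod (p x t)))\<^sup>2
     - 1/2 * c2 * pdx p x t + \<i>*c1 * p x t"

definition Psi21 :: "(real \<Rightarrow> real \<Rightarrow> complex) \<Rightarrow> real \<Rightarrow> real \<Rightarrow> real \<Rightarrow> complex \<Rightarrow> real \<Rightarrow> real \<Rightarrow> complex" where
  "Psi21 p c0 c1 c2 lam x t =
     \<i> * cnj (p x t) * lam\<^sup>2 + (1/2 * pdx (conjf p) x t + \<i>*c2 * cnj (p x t))*lam
     - \<i>/4 * pdx (pdx (conjf p)) x t - \<i>/2 * cnj (p x t) * (complex_of_real (cmod (p x t)))\<^sup>2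
     + 1/2 * c2 * pdx (conjf p) x t + \<i>*c1 * cnj (p x t)"

definition Psi :: "(real \<Rightarrow> real \<Rightarrow> complex) \<Rightarrow> real \<Rightarrow> real \<Rightarrow> real \<Rightarrow> complex \<Rightarrow> real \<Rightarrow> real \<Rightarrow> complex^2^2" where
  "Psi p c0 c1 c2 lam x t = mat2 (Psi11 p c0 c1 c2 lam x t) (Psi12 p c0 c1 c2 lam x t)
       (Psi21 p c0 c1 c2 lam x t) (- Psi11 p c0 c1 c2 lam x t)"

definition two_phase :: "(real \<Rightarrow> real \<Rightarrow> complex) \<Rightarrow> real \<Rightarrow> real \<Rightarrow> real \<Rightarrow> bool" where
  "two_phase p c0 c1 c2 \<longleftrightarrow> nls_solution p \<and>
    (\<forall>lam x t. pdx (Psi p c0 c1 c2 lam) x t = Umat p lam x t ** Psi p c0 c1 c2 lam x t - Psi p c0 c1 c2 lam x t ** Umat p lam x t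
           \<and> pdt (Psi p c0 c1 c2 lam) x t = Vmat p lam x t ** Psi p c0 c1 c2 lam x t - Psi p c0 c1 c2 lam x t ** Vmat p lam x t)"

definition nu1 :: "(real \<Rightarrow> real \<Rightarrow> complex) \<Rightarrow> real \<Rightarrow> real \<Rightarrow> complex" where
  "nu1 p x t = (complex_of_real (cmod (p x t)))\<^sup>2"

definition nu2 :: "(real \<Rightarrow> real \<Rightarrow> complex) \<Rightarrow> real \<Rightarrow> real \<Rightarrow> complex" where
  "nu2 p x t = \<i> * (cnj (p x t) * pdx p x t - p x t * pdx (conjf p) x t)"

end

theory Submission
  imports Defs
begin

text \<open>Comparing the coefficients of \<open>\<lambda>\<close> in \<open>\<Psi>\<^sub>1\<^sub>2(\<lambda>) = ip(\<lambda> - \<mu>\<^sub>1)(\<lambda> - \<mu>\<^sub>2)\<close>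
  expresses \<open>p\<^sub>x\<close> and \<open>p\<^sub>x\<^sub>x\<close> through \<open>p\<close>, \<open>\<mu>\<^sub>1\<close>, \<open>\<mu>\<^sub>2\<close> and the constants, which gives
  \<open>\<partial>\<^sub>x\<nu>\<^sub>1\<close> and \<open>\<partial>\<^sub>x\<nu>\<^sub>2\<close>; \<open>\<partial>\<^sub>t\<nu>\<^sub>1 = \<partial>\<^sub>x\<nu>\<^sub>2\<close> is a conservation law of NLS.
  Since \<open>\<Psi>\<^sub>1\<^sub>1(0) = i\<nu>\<^sub>2/4 + ic\<^sub>2\<nu>\<^sub>1/2 - ic\<^sub>0\<close>, the \<open>(1,1)\<close> entry of \<open>\<Psi>\<^sub>t = [V,\<Psi>]\<close> at
  \<open>\<lambda> = 0\<close> gives \<open>\<partial>\<^sub>t\<nu>\<^sub>2\<close> in terms of \<open>\<Psi>\<^sub>1\<^sub>2(0) = ip\<mu>\<^sub>1\<mu>\<^sub>2\<close> and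
  \<open>\<Psi>\<^sub>2\<^sub>1(0) = -conj \<Psi>\<^sub>1\<^sub>2(0)\<close>.\<close>

lemma has_vector_derivative_pdx:
  assumes "(\<lambda>w. f (fst w) (snd w)) differentiable (at (x, t))"
  shows "((\<lambda>y. f y t) has_vector_derivative pdx f x t) (at x)"
proof -
  have "(\<lambda>y::real. (y, t)) differentiable (at x)"
    by (intro derivative_intros)
  from differentiable_chain_at[OF this assms] have "(\<lambda>y. f y t) differentiable (at x)"
    by (simp add: o_def)
  then show ?thesis
    unfolding pdx_def by (simp add: vector_derivative_works)
qed

lemma has_vector_derivative_pdt:
  assumes "(\<lambda>w. f (fst w) (snd w)) differentiable (at (x, t))"
  shows "((\<lambda>s. f x s) has_vector_derivative pdt f x t) (at t)"
proof -
  have "(\<lambda>s::real. (x, s)) differentiable (at t)"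
    by (intro derivative_intros)
  from differentiable_chain_at[OF this assms] have "(\<lambda>s. f x s) differentiable (at t)"
    by (simp add: o_def)
  then show ?thesis
    unfolding pdt_def by (simp add: vector_derivative_works)
qed

lemma smooth2_has_pdx:
  "smooth2 p \<Longrightarrow> ((\<lambda>y. iter_pd ds p y t) has_vector_derivative pdx (iter_pd ds p) x t) (at x)"
  unfolding smooth2_def by (blast intro: has_vector_derivative_pdx)

lemma smooth2_has_pdt:
  "smooth2 p \<Longrightarrow> ((\<lambda>s. iter_pd ds p x s) has_vector_derivative pdt (iter_pd ds p) x t) (at t)"
  unfolding smooth2_def by (blast intro: has_vector_derivative_pdt)

lemma pdx_conjf:
  assumes "(\<lambda>y. f y t) differentiable (at x)"
  shows "pdx (conjf f) x t = cnj (pdx f x t)"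
  using vector_derivative_cnj[OF assms] by (simp add: pdx_def conjf_def)

lemma smooth2_pdx_conjf:
  assumes "smooth2 p"
  shows "pdx (conjf (iter_pd ds p)) = conjf (pdx (iter_pd ds p))"
proof (intro ext)
  fix x t
  show "pdx (conjf (iter_pd ds p)) x t = conjf (pdx (iter_pd ds p)) x t"
    using pdx_conjf[OF differentiableI_vector[OF smooth2_has_pdx[OF assms]]]
    by (simp add: conjf_def)
qed

lemma has_vector_derivative_vec_lambda:
  fixes f :: "real \<Rightarrow> 'a::real_normed_vector ^ 'n"
  assumes "\<And>i. ((\<lambda>s. f s $ i) has_vector_derivative f' i) (at t)"
  shows "(f has_vector_derivative (\<chi> i. f' i)) (at t)"
proof -
  let ?q = "\<lambda>g D y. (1 / norm (y - t)) *\<^sub>R (g y - (g t + (y - t) *\<^sub>R D))"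
  have "(?q (\<lambda>s. f s $ i) (f' i) \<longlongrightarrow> 0) (at t)" for i
    using assms[of i]
    unfolding has_vector_derivative_def has_derivative_within[of _ _ t UNIV, simplified] by simp
  then have "((\<lambda>y. \<chi> i. ?q (\<lambda>s. f s $ i) (f' i) y) \<longlongrightarrow> (\<chi> i. 0)) (at t)"
    by (rule tendsto_vec_lambda)
  moreover have "(\<lambda>y. \<chi> i. ?q (\<lambda>s. f s $ i) (f' i) y) = ?q f (\<chi> i. f' i)"
    by (auto simp: vec_eq_iff)
  ultimately show ?thesis
    unfolding has_vector_derivative_def has_derivative_within[of _ _ t UNIV, simplified]
    by (simp add: zero_vec_def bounded_linear_scaleR_left)
qed

lemma mat2_nth [simp]:
  "mat2 a b c d $ 1 $ 1 = a" "mat2 a b c d $ 1 $ 2 = b"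
  "mat2 a b c d $ 2 $ 1 = c" "mat2 a b c d $ 2 $ 2 = d"
  by (simp_all add: mat2_def)

lemma commutator_mat2_11:
  "(mat2 a b c d ** mat2 a' b' c' d' - mat2 a' b' c' d' ** mat2 a b c d) $ 1 $ 1 = b * c' - b' * c"
  by (simp add: matrix_matrix_mult_def sum_2 algebra_simps)

lemma pdt_mat2:
  assumes "(\<lambda>s. a x s) differentiable (at t)" "(\<lambda>s. b x s) differentiable (at t)"
    and "(\<lambda>s. c x s) differentiable (at t)" "(\<lambda>s. d x s) differentiable (at t)"
  shows "pdt (\<lambda>x t. mat2 (a x t) (b x t) (c x t) (d x t)) x t
    = mat2 (pdt a x t) (pdt b x t) (pdt c x t) (pdt d x t)"
proof -
  have "((\<lambda>s. mat2 (a x s) (b x s) (c x s) (d x s)) has_vector_derivative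
          mat2 (pdt a x t) (pdt b x t) (pdt c x t) (pdt d x t)) (at t)"
    unfolding mat2_def
    by (intro has_vector_derivative_vec_lambda)
       (use assms in \<open>auto simp: pdt_def vector_derivative_works\<close>)
  then show ?thesis
    unfolding pdt_def by (rule vector_derivative_at)
qed

lemma of_real_cmod_square: "(complex_of_real (cmod z))\<^sup>2 = z * cnj z"
  by (metis complex_norm_square of_real_power)

lemma nu1_eq: "nu1 p x t = p x t * cnj (p x t)"
  by (simp add: nu1_def of_real_cmod_square)

lemma nu2_eq:
  "smooth2 p \<Longrightarrow> nu2 p x t = \<i> * (cnj (p x t) * pdx p x t - p x t * cnj (pdx p x t))"
  using smooth2_pdx_conjf[of p "[]"] by (simp add: nu2_def conjf_def)

lemma Psi11_zero:
  "smooth2 p \<Longrightarrow> Psi11 p c0 c1 c2 0 x t = \<i>/4 * nu2 p x t + \<i>/2 * c2 * nu1 p x t - \<i> * c0"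
  using smooth2_pdx_conjf[of p "[]"]
  by (simp add: Psi11_def nu2_eq nu1_eq of_real_cmod_square conjf_def field_simps)

lemma Psi21_eq_cnj_Psi12:
  "smooth2 p \<Longrightarrow> Psi21 p c0 c1 c2 lam x t = - cnj (Psi12 p c0 c1 c2 (cnj lam) x t)"
  using smooth2_pdx_conjf[of p "[]"] smooth2_pdx_conjf[of p "[True]"]
  by (simp add: Psi21_def Psi12_def conjf_def algebra_simps)

lemma pdx_nu1:
  assumes "smooth2 p"
  shows "pdx (nu1 p) x t = p x t * cnj (pdx p x t) + pdx p x t * cnj (p x t)"
proof -
  have "((\<lambda>y. p y t) has_vector_derivative pdx p x t) (at x)"
    using smooth2_has_pdx[OF assms, of "[]"] by simp
  from has_vector_derivative_mult[OF this has_vector_derivative_cnj[OF this]] show ?thesis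
    unfolding pdx_def[of "nu1 p"] nu1_eq by (simp add: vector_derivative_at add.commute)
qed

lemma pdx_nu2:
  assumes "smooth2 p"
  shows "pdx (nu2 p) x t
    = \<i> * (cnj (p x t) * pdx (pdx p) x t - p x t * cnj (pdx (pdx p) x t))"
proof -
  have "((\<lambda>y. p y t) has_vector_derivative pdx p x t) (at x)"
       "((\<lambda>y. pdx p y t) has_vector_derivative pdx (pdx p) x t) (at x)"
    using smooth2_has_pdx[OF assms, of "[]"] smooth2_has_pdx[OF assms, of "[True]"] by simp_all
  then have "((\<lambda>y. nu2 p y t) has_vector_derivative
      \<i> * ((cnj (p x t) * pdx (pdx p) x t + cnj (pdx p x t) * pdx p x t)
           - (p x t * cnj (pdx (pdx p) x t) + pdx p x t * cnj (pdx p x t)))) (at x)"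
    unfolding nu2_eq[OF assms]
    by (intro has_vector_derivative_mult_right has_vector_derivative_diff has_vector_derivative_mult
        has_vector_derivative_cnj)
  then show ?thesis
    unfolding pdx_def[of "nu2 p"] by (simp add: vector_derivative_at algebra_simps)
qed

lemma smooth2_differentiable_t:
  "smooth2 p \<Longrightarrow> (\<lambda>s. iter_pd ds p x s) differentiable (at t)"
  using differentiableI_vector[OF smooth2_has_pdt] .

lemma pdt_nu1:
  assumes "smooth2 p"
  shows "pdt (nu1 p) x t = p x t * cnj (pdt p x t) + pdt p x t * cnj (p x t)"
proof -
  have "((\<lambda>s. p x s) has_vector_derivative pdt p x t) (at t)"
    using smooth2_has_pdt[OF assms, of "[]"] by simp
  from has_vector_derivative_mult[OF this has_vector_derivative_cnj[OF this]] show ?thesis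
    unfolding pdt_def[of "nu1 p"] nu1_eq by (simp add: vector_derivative_at add.commute)
qed

lemma nu_differentiable_t:
  assumes "smooth2 p"
  shows "(\<lambda>s. nu1 p x s) differentiable (at t)" "(\<lambda>s. nu2 p x s) differentiable (at t)"
  using smooth2_differentiable_t[OF assms, of "[]"] smooth2_differentiable_t[OF assms, of "[True]"]
  unfolding nu1_eq nu2_eq[OF assms]
  by (auto intro!: derivative_intros simp: differentiable_cnj_iff)

lemma Psi12_differentiable_t:
  assumes "smooth2 p"
  shows "(\<lambda>s. Psi12 p c0 c1 c2 lam x s) differentiable (at t)"
  using smooth2_differentiable_t[OF assms, of "[]"] smooth2_differentiable_t[OF assms, of "[True]"]
    smooth2_differentiable_t[OF assms, of "[True, True]"]
  unfolding Psi12_def of_real_cmod_square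
  by (auto intro!: derivative_intros simp: differentiable_cnj_iff)

lemma two_phase_nls_solution: "two_phase p c0 c1 c2 \<Longrightarrow> nls_solution p"
  by (simp add: two_phase_def)

lemma two_phase_smooth2: "two_phase p c0 c1 c2 \<Longrightarrow> smooth2 p"
  by (simp add: two_phase_def nls_solution_def)

lemma two_phase_lax_t_11_zero:
  assumes "two_phase p c0 c1 c2"
  shows "\<i>/4 * pdt (nu2 p) x t + \<i>/2 * c2 * pdt (nu1 p) x t
    = - pdx p x t * Psi21 p c0 c1 c2 0 x t - Psi12 p c0 c1 c2 0 x t * cnj (pdx p x t)"
proof -
  have smooth: "smooth2 p"
    using two_phase_smooth2[OF assms] .
  have lax: "pdt (Psi p c0 c1 c2 0) x t
      = Vmat p 0 x t ** Psi p c0 c1 c2 0 x t - Psi p c0 c1 c2 0 x t ** Vmat p 0 x t"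
    using assms unfolding two_phase_def by blast
  have "((\<lambda>s. Psi11 p c0 c1 c2 0 x s) has_vector_derivative
      \<i>/4 * pdt (nu2 p) x t + \<i>/2 * c2 * pdt (nu1 p) x t) (at t)"
    unfolding Psi11_zero[OF smooth] pdt_def
    using nu_differentiable_t[OF smooth, of x t]
    by (intro derivative_eq_intros) (auto simp: vector_derivative_works)
  then have Psi11: "(\<lambda>s. Psi11 p c0 c1 c2 0 x s) differentiable (at t)"
      "pdt (Psi11 p c0 c1 c2 0) x t = \<i>/4 * pdt (nu2 p) x t + \<i>/2 * c2 * pdt (nu1 p) x t"
    by (auto simp: pdt_def vector_derivative_at intro: differentiableI_vector)
  have "(\<lambda>s. Psi21 p c0 c1 c2 0 x s) differentiable (at t)"
    unfolding Psi21_eq_cnj_Psi12[OF smooth]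
    using Psi12_differentiable_t[OF smooth] by (auto intro!: derivative_intros simp: differentiable_cnj_iff)
  with Psi11 Psi12_differentiable_t[OF smooth]
  have "pdt (Psi11 p c0 c1 c2 0) x t = pdt (Psi p c0 c1 c2 0) x t $ 1 $ 1"
    using pdt_mat2[of "Psi11 p c0 c1 c2 0" x t "Psi12 p c0 c1 c2 0" "Psi21 p c0 c1 c2 0"
        "\<lambda>x t. - Psi11 p c0 c1 c2 0 x t"]
    by (auto simp: Psi_def[abs_def] differentiable_minus)
  also have "\<dots> = (Vmat p 0 x t ** Psi p c0 c1 c2 0 x t - Psi p c0 c1 c2 0 x t ** Vmat p 0 x t) $ 1 $ 1"
    by (simp only: lax)
  finally show ?thesis
    using smooth2_pdx_conjf[OF smooth, of "[]"]
    unfolding Vmat_def Psi_def commutator_mat2_11 by (simp add: Psi11 conjf_def)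
qed

lemma nls_pdt_nu1:
  assumes "nls_solution p"
  shows "pdt (nu1 p) x t = pdx (nu2 p) x t"
proof -
  have smooth: "smooth2 p"
    and nls: "\<i> * pdt p x t + pdx (pdx p) x t + 2 * (p x t * cnj (p x t)) * p x t = 0"
    using assms[unfolded nls_solution_def] by (auto simp: of_real_cmod_square)
  have "pdt p x t = - \<i> * (\<i> * pdt p x t)" by simp
  also have "\<i> * pdt p x t = - (pdx (pdx p) x t + 2 * (p x t * cnj (p x t)) * p x t)"
    using nls by (metis add.assoc eq_neg_iff_add_eq_0)
  finally show ?thesis
    using smooth by (simp add: pdt_nu1 pdx_nu2 algebra_simps)
qed

lemma quadratic_coeffs_eq:
  fixes a b c a' b' c' :: "'a::field_char_0"
  assumes "\<And>z. a * z\<^sup>2 + b * z + c = a' * z\<^sup>2 + b' * z + c'"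
  shows "b = b'" "c = c'"
proof -
  show "c = c'" using assms[of 0] by simp
  have "2 * b = (a * 1\<^sup>2 + b * 1 + c) - (a * (-1)\<^sup>2 + b * (-1) + c)"
    by (simp add: algebra_simps)
  also have "\<dots> = (a' * 1\<^sup>2 + b' * 1 + c') - (a' * (-1)\<^sup>2 + b' * (-1) + c')"
    by (simp only: assms)
  also have "\<dots> = 2 * b'"
    by (simp add: algebra_simps)
  finally show "b = b'" by simp
qed

context
  fixes p :: "real \<Rightarrow> real \<Rightarrow> complex" and c0 c1 c2 x t :: real and \<mu>1 \<mu>2 :: complex
  assumes two_phase: "two_phase p c0 c1 c2"
    and dirichlet: "\<forall>lam. Psi12 p c0 c1 c2 lam x t = \<i> * p x t * (lam - \<mu>1) * (lam - \<mu>2)"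
begin

lemma pdx_pdxx_dirichlet:
  shows "pdx p x t = 2 * \<i> * p x t * (\<mu>1 + \<mu>2 + c2)"
    and "pdx (pdx p) x t
      = -2 * p x t * (2 * (\<mu>1 * \<mu>2 + c2 * (\<mu>1 + \<mu>2) + c2\<^sup>2 - c1) + nu1 p x t)"
proof -
  let ?P = "p x t" and ?X = "pdx p x t" and ?Z = "pdx (pdx p) x t"
  have "\<i> * ?P * lam\<^sup>2 + (-1/2 * ?X + \<i> * c2 * ?P) * lam
      + (- \<i>/4 * ?Z - \<i>/2 * ?P * nu1 p x t - 1/2 * c2 * ?X + \<i> * c1 * ?P)
    = \<i> * ?P * lam\<^sup>2 + (- \<i> * ?P * (\<mu>1 + \<mu>2)) * lam + \<i> * ?P * \<mu>1 * \<mu>2" for lam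
    using dirichlet[rule_format, of lam] by (simp add: Psi12_def nu1_def power2_eq_square algebra_simps)
  note coeffs = quadratic_coeffs_eq[OF this]
  from coeffs(1) show X: "?X = 2 * \<i> * ?P * (\<mu>1 + \<mu>2 + c2)"
    by (simp add: field_simps)
  have "?Z = 4 * \<i> * (- \<i>/4 * ?Z)" by simp
  also have "- \<i>/4 * ?Z = \<i> * ?P * \<mu>1 * \<mu>2 + \<i>/2 * ?P * nu1 p x t + 1/2 * c2 * ?X - \<i> * c1 * ?P"
    using coeffs(2) by (simp add: algebra_simps)
  finally show "?Z = -2 * ?P * (2 * (\<mu>1 * \<mu>2 + c2 * (\<mu>1 + \<mu>2) + c2\<^sup>2 - c1) + nu1 p x t)"
    unfolding X by (simp add: algebra_simps power2_eq_square)
qed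

lemma two_phase_pdx_nu1: "pdx (nu1 p) x t = 2 * \<i> * nu1 p x t * (\<mu>1 + \<mu>2 - cnj \<mu>1 - cnj \<mu>2)"
  using pdx_nu1[OF two_phase_smooth2[OF two_phase]] pdx_pdxx_dirichlet(1) by (simp add: nu1_eq algebra_simps)

lemma two_phase_pdx_nu2:
  "pdx (nu2 p) x t = 4 * \<i> * nu1 p x t * (cnj \<mu>1 * cnj \<mu>2 - \<mu>1 * \<mu>2) - 2 * c2 * pdx (nu1 p) x t"
  unfolding pdx_nu2[OF two_phase_smooth2[OF two_phase]] pdx_pdxx_dirichlet(2) two_phase_pdx_nu1
  by (simp add: nu1_eq algebra_simps power2_eq_square)

lemma two_phase_pdt_nu2:
  "pdt (nu2 p) x t = 8 * \<i> * nu1 p x t * ((\<mu>1 - cnj \<mu>1) * (complex_of_real (cmod \<mu>2))\<^sup>2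
                                             + (\<mu>2 - cnj \<mu>2) * (complex_of_real (cmod \<mu>1))\<^sup>2)
                        - 4 * c2 * pdx (nu2 p) x t - 4 * c2\<^sup>2 * pdx (nu1 p) x t"
proof -
  let ?X = "pdx p x t" and ?\<Psi>12 = "\<i> * p x t * \<mu>1 * \<mu>2"
  have "pdt (nu2 p) x t = - 4 * \<i> * (\<i>/4 * pdt (nu2 p) x t)" by simp
  also have "\<i>/4 * pdt (nu2 p) x t = ?X * cnj ?\<Psi>12 - ?\<Psi>12 * cnj ?X - \<i>/2 * c2 * pdx (nu2 p) x t"
    using two_phase_lax_t_11_zero[OF two_phase, of x t] dirichlet[rule_format, of 0]
    by (simp add: Psi21_eq_cnj_Psi12[OF two_phase_smooth2[OF two_phase]] nls_pdt_nu1[OF two_phase_nls_solution[OF two_phase]]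
        algebra_simps)
  finally show ?thesis
    unfolding two_phase_pdx_nu2 two_phase_pdx_nu1 pdx_pdxx_dirichlet(1) of_real_cmod_square
    by (simp add: nu1_eq algebra_simps power2_eq_square)
qed

end

theorem mainTheorem4:
  fixes p :: "real \<Rightarrow> real \<Rightarrow> complex" and c0 c1 c2 x t :: real and \<mu>1 \<mu>2 :: complex
  assumes "two_phase p c0 c1 c2"
    and "p x t \<noteq> 0"
    and "\<forall>lam. Psi12 p c0 c1 c2 lam x t = \<i> * p x t * (lam - \<mu>1) * (lam - \<mu>2)"
  shows "pdx (nu1 p) x t = 2 * \<i> * nu1 p x t * (\<mu>1 + \<mu>2 - cnj \<mu>1 - cnj \<mu>2)
    \<and> pdx (nu2 p) x t = 4 * \<i> * nu1 p x t * (cnj \<mu>1 * cnj \<mu>2 - \<mu>1 * \<mu>2) - 2 * c2 * pdx (nu1 p) x t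
    \<and> pdt (nu1 p) x t = pdx (nu2 p) x t
    \<and> pdt (nu2 p) x t = 8 * \<i> * nu1 p x t * ((\<mu>1 - cnj \<mu>1) * (complex_of_real (cmod \<mu>2))\<^sup>2
                                               + (\<mu>2 - cnj \<mu>2) * (complex_of_real (cmod \<mu>1))\<^sup>2)
                          - 4 * c2 * pdx (nu2 p) x t - 4 * c2\<^sup>2 * pdx (nu1 p) x t"
  \<comment> \<open>\<open>p x t \<noteq> 0\<close> only guarantees that \<open>\<mu>1, \<mu>2\<close> exist; the factorisation of \<open>Psi12\<close> suffices.\<close>
  using two_phase_pdx_nu1[OF assms(1,3)] two_phase_pdx_nu2[OF assms(1,3)]
    nls_pdt_nu1[OF two_phase_nls_solution[OF assms(1)]] two_phase_pdt_nu2[OF assms(1,3)]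
  by blast

end
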